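(* Let \(k\ge0\), \(\lambda=(\lambda_1\ge\dots\ge\lambda_k\ge0)\), and let \(J=(j_0<\dots<j_{r-1})\) be a strictly increasing sequence of non-negative integers of length \(r\ge k\) with \(J\succeq_k\lambda\). Then \(N_k(J)\ge|\lambda|\), with equality if and only if \(r=k\) and \(J=J^{(k)}_\lambda\).
   Context: \(|\lambda|=\lambda_1+\dots+\lambda_k\). \(J\succeq_k\lambda\) means \(j_{r-i}\ge\lambda_i+k-i\) for \(i=1,\dots,k\). \(J^{(k)}_\lambda=(\lambda_k,\lambda_{k-1}+1,\dots,\lambda_1+k-1)\). \(N_k(J)=r(r-k)+\sum_{q=0}^{r-1}(j_q-q)\). *)

theory Defs
  imports Main
begin

text \<open>A partition \<lambda> = (\<lambda>_1 \<ge> ... \<ge> \<lambda>_k \<ge> 0) is a function lam :: nat \<Rightarrow> nat,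
  only the values lam 1, ..., lam k being relevant.  A sequence J = (j_0 < ... < j_{r-1})
  is a function J :: nat \<Rightarrow> nat, only J 0, ..., J (r-1) being relevant.\<close>

definition is_partition :: "nat \<Rightarrow> (nat \<Rightarrow> nat) \<Rightarrow> bool" where
  "is_partition k lam \<longleftrightarrow> (\<forall>i j. 1 \<le> i \<longrightarrow> i \<le> j \<longrightarrow> j \<le> k \<longrightarrow> lam j \<le> lam i)"

definition part_size :: "nat \<Rightarrow> (nat \<Rightarrow> nat) \<Rightarrow> nat" where
  "part_size k lam = (\<Sum>i=1..k. lam i)"

definition strictly_incr :: "nat \<Rightarrow> (nat \<Rightarrow> nat) \<Rightarrow> bool" where
  "strictly_incr r J \<longleftrightarrow> (\<forall>p q. p < q \<longrightarrow> q < r \<longrightarrow> J p < J q)"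

definition dominates :: "nat \<Rightarrow> nat \<Rightarrow> (nat \<Rightarrow> nat) \<Rightarrow> (nat \<Rightarrow> nat) \<Rightarrow> bool" where
  "dominates k r J lam \<longleftrightarrow> (\<forall>i\<in>{1..k}. int (J (r - i)) \<ge> int (lam i) + int k - int i)"

definition Nk :: "nat \<Rightarrow> nat \<Rightarrow> (nat \<Rightarrow> nat) \<Rightarrow> int" where
  "Nk k r J = int r * (int r - int k) + (\<Sum>q<r. int (J q) - int q)"

definition Jk :: "nat \<Rightarrow> (nat \<Rightarrow> nat) \<Rightarrow> nat \<Rightarrow> nat" where
  "Jk k lam q = lam (k - q) + q"

end

theory Submission
  imports Defs
begin

text \<open>Compare J with the sequence L that equals q for q < r - k and
  \<lambda>_{r-q} + q - (r - k) for q \<ge> r - k: strict monotonicity and J \<succeq>_k \<lambda> give L \<le> J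
  pointwise, and N_k(L) = |\<lambda>| + (r - k)^2.  Since N_k is strictly monotone in each
  entry, N_k(J) \<ge> |\<lambda>| + (r - k)^2 \<ge> |\<lambda>|, with equality only if r = k and J = L,
  and for r = k the sequence L is J^(k)_\<lambda>.\<close>

definition lower_seq :: "nat \<Rightarrow> nat \<Rightarrow> (nat \<Rightarrow> nat) \<Rightarrow> nat \<Rightarrow> nat" where
  "lower_seq k r lam q = (if q < r - k then q else lam (r - q) + (q - (r - k)))"

lemma strictly_incr_ge_index:
  assumes "strictly_incr r J" and "q < r"
  shows "q \<le> J q"
  using assms(2)
proof (induction q)
  case (Suc q)
  then have "J q < J (Suc q)" using assms(1) by (auto simp: strictly_incr_def)
  with Suc show ?case by simp
qed simp

lemma lower_seq_le:
  assumes "strictly_incr r J" and "k \<le> r" and "dominates k r J lam" and "q < r"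
  shows "lower_seq k r lam q \<le> J q"
proof (cases "q < r - k")
  case True
  then show ?thesis using strictly_incr_ge_index[OF assms(1,4)] by (simp add: lower_seq_def)
next
  case False
  define i where "i = r - q"
  have i: "i \<in> {1..k}" "q = r - i" using False assms(2,4) by (auto simp: i_def)
  then have "int (J q) \<ge> int (lam i) + int k - int i"
    using assms(3) by (auto simp: dominates_def)
  moreover have "r - q = i" and "q - (r - k) = k - i" using i assms(2) by auto
  ultimately show ?thesis using False i(1) by (simp add: lower_seq_def)
qed

lemma lower_seq_eq_Jk: "q < k \<Longrightarrow> lower_seq k k lam q = Jk k lam q"
  by (simp add: lower_seq_def Jk_def)

lemma Nk_lower_seq:
  assumes "k \<le> r"
  shows "Nk k r (lower_seq k r lam) = int (part_size k lam) + (int r - int k)^2"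
proof -
  let ?L = "lower_seq k r lam"
  have split: "{..<r} = {..<r-k} \<union> {r-k..<r}" by auto
  have "(\<Sum>q<r. int (?L q) - int q)
      = (\<Sum>q<r-k. int (?L q) - int q) + (\<Sum>q\<in>{r-k..<r}. int (?L q) - int q)"
    by (subst split, rule sum.union_disjoint) auto
  also have "(\<Sum>q<r-k. int (?L q) - int q) = 0" by (simp add: lower_seq_def)
  also have "(\<Sum>q\<in>{r-k..<r}. int (?L q) - int q)
      = (\<Sum>q\<in>{r-k..<r}. int (lam (r - q)) + int k - int r)"
    using assms by (intro sum.cong) (auto simp: lower_seq_def)
  also have "\<dots> = (\<Sum>i=1..k. int (lam i) + int k - int r)"
    using assms
    by (intro sum.reindex_bij_witness[where i="\<lambda>i. r - i" and j="\<lambda>q. r - q"]) auto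
  also have "\<dots> = int (part_size k lam) - int k * (int r - int k)"
    by (simp add: sum.distrib sum_subtractf part_size_def algebra_simps)
  finally show ?thesis
    by (simp add: Nk_def power2_eq_square algebra_simps)
qed

lemma Nk_diff: "Nk k r J - Nk k r J' = (\<Sum>q<r. int (J q) - int (J' q))"
  by (simp add: Nk_def sum_subtractf)

lemma Nk_mono:
  assumes "\<And>q. q < r \<Longrightarrow> J' q \<le> J q"
  shows "Nk k r J' \<le> Nk k r J"
  using Nk_diff[of k r J J'] sum_nonneg[of "{..<r}" "\<lambda>q. int (J q) - int (J' q)"] assms
  by simp

lemma Nk_eq_iff_eq_on:
  assumes "\<And>q. q < r \<Longrightarrow> J' q \<le> J q"
  shows "Nk k r J = Nk k r J' \<longleftrightarrow> (\<forall>q<r. J q = J' q)"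
proof -
  have "Nk k r J = Nk k r J' \<longleftrightarrow> (\<Sum>q<r. int (J q) - int (J' q)) = 0"
    using Nk_diff[of k r J J'] by linarith
  also have "\<dots> \<longleftrightarrow> (\<forall>q<r. J q = J' q)"
    using assms by (subst sum_nonneg_eq_0_iff) (auto simp: le_antisym)
  finally show ?thesis .
qed

theorem lemma4p15:
  fixes k r :: nat and lam J :: "nat \<Rightarrow> nat"
  assumes "is_partition k lam"
    and "strictly_incr r J"
    and "k \<le> r"
    and "dominates k r J lam"
  shows "Nk k r J \<ge> int (part_size k lam) \<and>
    (Nk k r J = int (part_size k lam) \<longleftrightarrow> (r = k \<and> (\<forall>q<k. J q = Jk k lam q)))"
proof -
  let ?L = "lower_seq k r lam"
  have L_le: "\<And>q. q < r \<Longrightarrow> ?L q \<le> J q"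
    using lower_seq_le[OF assms(2-4)] .
  have NL: "Nk k r ?L = int (part_size k lam) + (int r - int k)^2"
    using Nk_lower_seq[OF assms(3)] .
  have bound: "Nk k r J \<ge> int (part_size k lam) + (int r - int k)^2"
    using Nk_mono[of r ?L J k] L_le NL by simp
  then have ge: "Nk k r J \<ge> int (part_size k lam)"
    using zero_le_power2[of "int r - int k"] by linarith
  have "Nk k r J = int (part_size k lam) \<longleftrightarrow>
      (int r - int k)^2 = 0 \<and> Nk k r J = Nk k r ?L"
    using bound NL zero_le_power2[of "int r - int k"] by linarith
  also have "\<dots> \<longleftrightarrow> r = k \<and> (\<forall>q<k. J q = Jk k lam q)"
    using Nk_eq_iff_eq_on[of r ?L J k] L_le lower_seq_eq_Jk by auto
  finally show ?thesis
    using ge by blast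
qed

end
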